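(* Let $C$ be an independent set of the Kneser graph of flags of type $\{2,3\}$ of $\mathrm{PG}(6,q)$ such that every plane and every solid occurs in at most $q+1$ flags of $C$; for a point $X$ let $\Delta_X(C)$ be the set of flags $(E,S)\in C$ with $X\in E$. Let $P$ be a point and suppose there are flags $(E_i,S_i)\in\Delta_P(C)$, $i\in\{1,2,3\}$, with $E_i\cap E_j=P$ for distinct $i,j$. Then every point $Q$ with $Q\notin\langle E_i,E_j\rangle$ and $Q\notin S_i$ for all $i,j\in\{1,2,3\}$ satisfies $$|\Delta_Q(C)|\le 3q^8+12q^7+21q^6+28q^5+26q^4+18q^3+12q^2+8q+4.$$
   Context: Dimensions are projective (planes 2, solids 3). A flag of type $\{2,3\}$ is a pair $(E,S)$ of a plane $E$ and a solid $S$ with $E\subseteq S$; in the Kneser graph distinct flags $(E,S),(E',S')$ are adjacent iff $E\cap S'=\emptyset$ and $E'\cap S=\emptyset$. $\langle\cdot\rangle$ denotes the span. *)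

theory Defs
  imports "HOL-Analysis.Analysis"
begin

text \<open>PG(6,q) modelled by the vector space F^7 over a finite field F with q = CARD(F).
Projective subspaces of projective dimension d are linear subspaces of
vector dimension d+1.\<close>

type_synonym 'a vec7 = "'a ^ 7"

definition psub_of_dim :: "nat \<Rightarrow> ('a::field) vec7 set \<Rightarrow> bool" where
  "psub_of_dim k U \<longleftrightarrow> vec.subspace U \<and> vec.dim U = k"

definition is_point :: "('a::field) vec7 set \<Rightarrow> bool" where
  "is_point U \<longleftrightarrow> psub_of_dim 1 U"

definition is_plane :: "('a::field) vec7 set \<Rightarrow> bool" where
  "is_plane U \<longleftrightarrow> psub_of_dim 3 U"

definition is_solid :: "('a::field) vec7 set \<Rightarrow> bool" where
  "is_solid U \<longleftrightarrow> psub_of_dim 4 U"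

definition is_flag23 :: "('a::field) vec7 set \<times> 'a vec7 set \<Rightarrow> bool" where
  "is_flag23 F \<longleftrightarrow> is_plane (fst F) \<and> is_solid (snd F) \<and> fst F \<subseteq> snd F"

text \<open>Projectively disjoint = trivial intersection as vector subspaces.\<close>
definition kneser_adj :: "('a::field) vec7 set \<times> 'a vec7 set \<Rightarrow> 'a vec7 set \<times> 'a vec7 set \<Rightarrow> bool" where
  "kneser_adj F F' \<longleftrightarrow> F \<noteq> F' \<and> fst F \<inter> snd F' = {0} \<and> fst F' \<inter> snd F = {0}"

definition independent_flags :: "(('a::field) vec7 set \<times> 'a vec7 set) set \<Rightarrow> bool" where
  "independent_flags C \<longleftrightarrow> (\<forall>F\<in>C. is_flag23 F) \<and> (\<forall>F\<in>C. \<forall>F'\<in>C. \<not> kneser_adj F F')"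

definition Delta :: "('a::field) vec7 set \<Rightarrow> ('a vec7 set \<times> 'a vec7 set) set \<Rightarrow> ('a vec7 set \<times> 'a vec7 set) set" where
  "Delta X C = {F \<in> C. X \<subseteq> fst F}"

end

theory Submission
  imports Defs
begin

text \<open>
  A flag (X, Y) of C through Q either has X meeting one of
  the solids S i, or X misses all three of them; then non-adjacency to (E i, S i) forces Y to meet
  every E i. The planes of the first kind are planes through Q meeting a solid S i, split according
  to whether they lie in span (Q, S i). A solid Y of the second kind either contains P, and then
  Y meets S 1 only in P (as X misses S 1), so Y meets span (Q, S 1) only in the line PQ; or it
  meets E 1, E 2, E 3 in points r1, r2, r3 different from P, and then either Y = span {Q, r1, r2, r3}
  or, by the exchange lemma, r1 lies in span (Q, r3, E 2). Every family of planes and solids is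
  counted by double counting tuples of vectors that generate its members, each plane and each solid
  carries at most q + 1 flags of C, and the resulting bounds add up to less than the stated
  polynomial.
\<close>

section \<open>Counting vectors in subspaces over a finite field\<close>

lemma card_field_ge_2: "2 \<le> CARD('a::{field,finite})"
proof -
  have "card {0::'a, 1} \<le> CARD('a)" by (rule card_mono) auto
  then show ?thesis by simp
qed

lemma scale_mem_subspace_iff:
  fixes x :: "'a::field^'n"
  assumes "vec.subspace S" "c \<noteq> 0"
  shows "c *s x \<in> S \<longleftrightarrow> x \<in> S"
proof
  assume "c *s x \<in> S"
  then have "inverse c *s (c *s x) \<in> S" by (rule vec.subspace_scale[OF assms(1)])
  then show "x \<in> S" using assms(2) by (simp add: vector_smult_assoc)
qed (rule vec.subspace_scale[OF assms(1)])

lemma span_insert_scale: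
  fixes x :: "'a::field^'n"
  assumes "c \<noteq> 0"
  shows "vec.span (insert (c *s x) A) = vec.span (insert x A)"
proof -
  have "c *s x \<in> vec.span (insert x A)"
    by (simp add: vec.span_base vec.span_scale)
  moreover have "x \<in> vec.span (insert (c *s x) A)"
    using scale_mem_subspace_iff[OF vec.subspace_span assms, of x "insert (c *s x) A"]
    by (simp add: vec.span_base)
  moreover have "A \<subseteq> vec.span (insert x A)" "A \<subseteq> vec.span (insert (c *s x) A)"
    by (meson subset_insertI order_trans vec.span_superset)+
  ultimately show ?thesis
    unfolding vec.span_eq by simp
qed

lemma span_insert_as_image:
  fixes a :: "'a::field^'n"
  shows "vec.span (insert a B) = (\<lambda>(c, x). c *s a + x) ` (UNIV \<times> vec.span B)"
proof (rule set_eqI, rule iffI)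
  fix y assume "y \<in> vec.span (insert a B)"
  then obtain k where "y - k *s a \<in> vec.span B" by (auto simp: vec.span_breakdown_eq)
  then show "y \<in> (\<lambda>(c, x). c *s a + x) ` (UNIV \<times> vec.span B)"
    by (intro image_eqI[of _ _ "(k, y - k *s a)"]) auto
next
  fix y assume "y \<in> (\<lambda>(c, x). c *s a + x) ` (UNIV \<times> vec.span B)"
  then obtain c x where "x \<in> vec.span B" "y = c *s a + x" by auto
  then show "y \<in> vec.span (insert a B)"
    unfolding vec.span_breakdown_eq by (intro exI[of _ c]) simp
qed

lemma card_span_independent:
  fixes B :: "('a::{field,finite}^'n) set"
  assumes "vec.independent B"
  shows "card (vec.span B) = CARD('a) ^ card B"
  using vec.finiteI_independent[OF assms] assms
proof (induction B rule: finite_induct)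
  case empty
  then show ?case by simp
next
  case (insert a B)
  have a: "a \<notin> vec.span B" and indB: "vec.independent B"
    using insert.prems insert.hyps(2) by (simp_all add: vec.independent_insert)
  have "inj_on (\<lambda>(c, x). c *s a + x) (UNIV \<times> vec.span B)"
  proof (rule inj_onI, clarify)
    fix c x c' x'
    assume x: "x \<in> vec.span B" "x' \<in> vec.span B" and eq: "c *s a + x = c' *s a + x'"
    then have "(c - c') *s a = x' - x" by (simp add: vector_sub_rdistrib algebra_simps)
    then have "(c - c') *s a \<in> vec.span B" using x by (simp add: vec.span_diff)
    then have "c = c'"
      using a scale_mem_subspace_iff[OF vec.subspace_span[of B], where c = "c - c'" and x = a]
      by auto
    then show "c = c' \<and> x = x'" using eq by simp
  qed
  then have "card (vec.span (insert a B)) = CARD('a) * card (vec.span B)"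
    by (simp add: span_insert_as_image card_image card_cartesian_product)
  then show ?case using insert.IH[OF indB] insert.hyps by simp
qed

lemma span_eq_subspace_of_card_eq_dim:
  fixes U :: "('a::field^'n) set"
  assumes "vec.subspace U" "B \<subseteq> U" "vec.independent B" "card B = vec.dim U"
  shows "vec.span B = U"
proof
  show "vec.span B \<subseteq> U" using assms(1,2) vec.span_minimal by blast
  show "U \<subseteq> vec.span B"
    using vec.card_eq_dim[OF assms(2,4) vec.finiteI_independent[OF assms(3)]] assms(3) by simp
qed

lemma card_subspace:
  fixes U :: "('a::{field,finite}^'n) set"
  assumes "vec.subspace U"
  shows "card U = CARD('a) ^ vec.dim U"
proof -
  obtain B where B: "B \<subseteq> U" "vec.independent B" "U \<subseteq> vec.span B" "card B = vec.dim U"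
    using vec.basis_exists[of U] by blast
  have "vec.span B = U" using vec.span_subspace[OF B(1,3) assms] .
  then show ?thesis using card_span_independent[OF B(2)] B(4) by simp
qed

lemma card_proper_subspace_le:
  fixes U W :: "('a::{field,finite}^'n) set"
  assumes "vec.subspace U" "vec.subspace W" "W \<subset> U" "vec.dim U = Suc k"
  shows "card W \<le> CARD('a) ^ k"
proof -
  have "vec.dim W < vec.dim U"
    using assms(1-3) vec.dim_psubset[of W U] by (simp add: vec.span_eq_iff[THEN iffD2])
  then show ?thesis
    using card_subspace[OF assms(2)] card_field_ge_2[where 'a='a] assms(4)
    by (simp add: power_increasing)
qed

lemma independent_insert_card:
  fixes S :: "('a::field^'n) set"
  assumes "vec.independent S" "a \<notin> vec.span S"
  shows "vec.independent (insert a S)" "card (insert a S) = Suc (card S)"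
proof -
  have "finite S" using assms(1) by (rule vec.finiteI_independent)
  moreover have "a \<notin> S" using assms(2) vec.span_base by blast
  ultimately show "vec.independent (insert a S)" "card (insert a S) = Suc (card S)"
    using vec.independent_insertI[OF assms(2,1)] by simp_all
qed

lemma card_subspace_diff_span:
  fixes U :: "('a::{field,finite}^'n) set"
  assumes "vec.subspace U" "B \<subseteq> U" "vec.independent B"
  shows "card (U - vec.span B) = CARD('a) ^ vec.dim U - CARD('a) ^ card B"
proof -
  have "vec.span B \<subseteq> U" using assms(1,2) vec.span_minimal by blast
  then show ?thesis
    using card_subspace[OF assms(1)] card_span_independent[OF assms(3)]
    by (simp add: card_Diff_subset)
qed

lemma dim_span_insert_subspace:
  fixes S :: "('a::field^'n) set"
  assumes "vec.subspace S" "v \<notin> S"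
  shows "vec.dim (vec.span (insert v S)) = Suc (vec.dim S)"
  using vec.dim_insert[of v S] vec.span_eq_iff[THEN iffD2, OF assms(1)] assms(2) by simp

lemma span_singleton_subset_iff:
  fixes x :: "'a::field^'n"
  assumes "vec.subspace X"
  shows "vec.span {x} \<subseteq> X \<longleftrightarrow> x \<in> X"
  using assms vec.span_minimal vec.span_base by blast

section \<open>Double counting\<close>

lemma card_mult_le_by_fibres:
  assumes "finite T" "finite SS" "\<And>s. s \<in> SS \<Longrightarrow> m \<le> card {t \<in> T. f t = s}"
  shows "m * card SS \<le> card T"
proof -
  have "m * card SS = (\<Sum>s\<in>SS. m)" by simp
  also have "\<dots> \<le> (\<Sum>s\<in>SS. card {t \<in> T. f t = s})" using assms(3) by (rule sum_mono)
  also have "\<dots> = card (\<Union>s\<in>SS. {t \<in> T. f t = s})"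
    using assms(1,2) by (intro card_UN_disjoint[symmetric]) auto
  also have "\<dots> \<le> card T" using assms(1) by (intro card_mono) auto
  finally show ?thesis .
qed

lemma card_le_by_fibres_le:
  assumes "finite PP" "g ` F \<subseteq> PP" "\<And>p. p \<in> PP \<Longrightarrow> card {x \<in> F. g x = p} \<le> k"
  shows "card F \<le> k * card PP"
proof -
  have "card F = card (\<Union>p\<in>PP. {x \<in> F. g x = p})"
    using assms(2) by (intro arg_cong[where f = card]) auto
  also have "\<dots> \<le> (\<Sum>p\<in>PP. card {x \<in> F. g x = p})" by (rule card_UN_le[OF assms(1)])
  also have "\<dots> \<le> (\<Sum>p\<in>PP. k)" using assms(3) by (rule sum_mono)
  finally show ?thesis by (simp add: mult.commute)
qed

lemma card_pairs_le_by_fst: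
  fixes C :: "('b::finite \<times> 'c::finite) set"
  assumes "F \<subseteq> C" "fst ` F \<subseteq> PP" "\<And>a. a \<in> PP \<Longrightarrow> card {b. (a, b) \<in> C} \<le> k"
  shows "card F \<le> k * card PP"
proof (rule card_le_by_fibres_le[OF finite assms(2)])
  fix a assume "a \<in> PP"
  have "card {x \<in> F. fst x = a} \<le> card (Pair a ` {b. (a, b) \<in> C})"
    using assms(1) by (intro card_mono) force+
  also have "\<dots> = card {b. (a, b) \<in> C}" by (rule card_image) (simp add: inj_on_def)
  finally show "card {x \<in> F. fst x = a} \<le> k" using assms(3)[OF \<open>a \<in> PP\<close>] by simp
qed

lemma card_pairs_le_by_snd:
  fixes C :: "('b::finite \<times> 'c::finite) set"
  assumes "F \<subseteq> C" "snd ` F \<subseteq> PP" "\<And>b. b \<in> PP \<Longrightarrow> card {a. (a, b) \<in> C} \<le> k"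
  shows "card F \<le> k * card PP"
proof -
  have "card (prod.swap ` F) \<le> k * card PP"
    using assms by (intro card_pairs_le_by_fst[of _ "prod.swap ` C"]) (auto simp: image_image)
  then show ?thesis by (simp add: card_image)
qed

lemma card_Sigma_const:
  assumes "finite A" "\<And>a. a \<in> A \<Longrightarrow> finite (B a) \<and> card (B a) = c"
  shows "card (Sigma A B) = card A * c"
  using assms by (simp add: card_SigmaI)

lemma card_Sigma_le:
  assumes "finite A" "\<And>a. a \<in> A \<Longrightarrow> finite (B a) \<and> card (B a) \<le> c"
  shows "card (Sigma A B) \<le> card A * c"
  using assms sum_bounded_above[of A "\<lambda>a. card (B a)" c] by (simp add: card_SigmaI)

section \<open>Subspaces through an independent set\<close>

lemma card_extension_pairs:
  fixes U B :: "('a::{field,finite}^'n) set"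
  assumes "vec.subspace U" "B \<subseteq> U" "vec.independent B"
  shows "card (SIGMA x:U - vec.span B. U - vec.span (insert x B))
    = (CARD('a) ^ vec.dim U - CARD('a) ^ card B) * (CARD('a) ^ vec.dim U - CARD('a) ^ Suc (card B))"
proof -
  have "card (U - vec.span (insert x B)) = CARD('a) ^ vec.dim U - CARD('a) ^ Suc (card B)"
    if "x \<in> U - vec.span B" for x
    using card_subspace_diff_span[OF assms(1), of "insert x B"] independent_insert_card[OF assms(3)]
      assms(2) that by simp
  then show ?thesis
    using card_subspace_diff_span[OF assms] by (simp add: card_Sigma_const)
qed

lemma span_extension_pair_eq:
  fixes U B :: "('a::field^'n) set"
  assumes "vec.subspace U" "B \<subseteq> U" "vec.independent B" "vec.dim U = card B + 2"
    "x \<in> U - vec.span B" "y \<in> U - vec.span (insert x B)"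
  shows "vec.span (insert y (insert x B)) = U"
proof -
  have "vec.independent (insert x B)" "card (insert x B) = Suc (card B)"
    using independent_insert_card[OF assms(3)] assms(5) by auto
  then have "vec.independent (insert y (insert x B))" "card (insert y (insert x B)) = vec.dim U"
    using independent_insert_card[of "insert x B" y] assms(4,6) by auto
  then show ?thesis
    using span_eq_subspace_of_card_eq_dim[OF assms(1)] assms(2,5,6) by auto
qed

lemma card_subspaces_extending_independent_le:
  fixes W B :: "('a::{field,finite}^'n) set"
  assumes "vec.subspace W" "B \<subseteq> W" "vec.independent B"
  defines "q \<equiv> CARD('a)" and "b \<equiv> card B"
  shows "(q ^ Suc b - q ^ b) * card {U. vec.subspace U \<and> vec.dim U = Suc b \<and> B \<subseteq> U \<and> U \<subseteq> W}
    \<le> q ^ vec.dim W - q ^ b"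
proof -
  define SS where "SS = {U. vec.subspace U \<and> vec.dim U = Suc b \<and> B \<subseteq> U \<and> U \<subseteq> W}"
  let ?f = "\<lambda>x. vec.span (insert x B)"
  have fibre: "q ^ Suc b - q ^ b \<le> card {x \<in> W - vec.span B. ?f x = U}" if U: "U \<in> SS" for U
  proof -
    have "U - vec.span B \<subseteq> {x \<in> W - vec.span B. ?f x = U}"
    proof
      fix x assume x: "x \<in> U - vec.span B"
      then have "?f x = U"
        using span_eq_subspace_of_card_eq_dim[of U "insert x B"] independent_insert_card[OF assms(3)] U
        unfolding SS_def b_def by auto
      then show "x \<in> {x \<in> W - vec.span B. ?f x = U}" using x U unfolding SS_def by auto
    qed
    then have "card (U - vec.span B) \<le> card {x \<in> W - vec.span B. ?f x = U}" by (intro card_mono) auto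
    then show ?thesis
      using U card_subspace_diff_span[of U B] assms(3) unfolding SS_def q_def b_def by auto
  qed
  have "(q ^ Suc b - q ^ b) * card SS \<le> card (W - vec.span B)"
    by (rule card_mult_le_by_fibres[OF _ _ fibre]) auto
  then show ?thesis
    unfolding card_subspace_diff_span[OF assms(1-3)] SS_def q_def b_def .
qed

lemma card_subspaces_through_independent_le:
  fixes W B :: "('a::{field,finite}^'n) set"
  assumes "vec.subspace W" "B \<subseteq> W" "vec.independent B"
  defines "q \<equiv> CARD('a)" and "b \<equiv> card B" and "w \<equiv> vec.dim W"
  shows "(q ^ (b + 2) - q ^ b) * (q ^ (b + 2) - q ^ Suc b)
           * card {E. vec.subspace E \<and> vec.dim E = b + 2 \<and> B \<subseteq> E \<and> E \<subseteq> W}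
         \<le> (q ^ w - q ^ b) * (q ^ w - q ^ Suc b)"
proof -
  define pairs where "pairs U = (SIGMA x:U - vec.span B. U - vec.span (insert x B))" for U
  define SS where "SS = {E. vec.subspace E \<and> vec.dim E = b + 2 \<and> B \<subseteq> E \<and> E \<subseteq> W}"
  let ?f = "\<lambda>(x, y). vec.span (insert y (insert x B))"
  have fibre: "(q ^ (b + 2) - q ^ b) * (q ^ (b + 2) - q ^ Suc b) \<le> card {t \<in> pairs W. ?f t = E}"
    if E: "E \<in> SS" for E
  proof -
    have "pairs E \<subseteq> {t \<in> pairs W. ?f t = E}"
      using E span_extension_pair_eq[of E B] assms(3) unfolding pairs_def SS_def b_def by auto
    then have "card (pairs E) \<le> card {t \<in> pairs W. ?f t = E}" by (intro card_mono) auto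
    then show ?thesis
      using E card_extension_pairs[of E B] assms(3) unfolding pairs_def SS_def q_def b_def by auto
  qed
  have "(q ^ (b + 2) - q ^ b) * (q ^ (b + 2) - q ^ Suc b) * card SS \<le> card (pairs W)"
    by (rule card_mult_le_by_fibres[OF _ _ fibre]) auto
  then show ?thesis
    unfolding card_extension_pairs[OF assms(1-3)] pairs_def SS_def q_def b_def w_def .
qed

lemma card_planes_through_vector_in_dim5_le:
  fixes W :: "('a::{field,finite}^'n) set"
  assumes "vec.subspace W" "vec.dim W = 5" "v \<in> W" "v \<noteq> 0"
  defines "q \<equiv> CARD('a)"
  shows "card {E. vec.subspace E \<and> vec.dim E = 3 \<and> v \<in> E \<and> E \<subseteq> W} \<le> (q^2 + 1) * (q^2 + q + 1)"
proof -
  have "(q^3 - q) * (q^3 - q^2) * card {E. vec.subspace E \<and> vec.dim E = 3 \<and> v \<in> E \<and> E \<subseteq> W}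
      \<le> (q^5 - q) * (q^5 - q^2)"
    using card_subspaces_through_independent_le[of W "{v}"] assms by (simp add: numeral_eq_Suc)
  moreover have "(q^5 - q) * (q^5 - q^2) = (q^3 - q) * (q^3 - q^2) * ((q^2 + 1) * (q^2 + q + 1))"
  proof -
    have "q \<le> q^3" "q^2 \<le> q^3" "q \<le> q^5" "q^2 \<le> q^5"
      using card_field_ge_2[where 'a='a] unfolding q_def by (auto intro: power_increasing[of 1, simplified])
    then have "int ((q^5 - q) * (q^5 - q^2)) = int ((q^3 - q) * (q^3 - q^2) * ((q^2 + 1) * (q^2 + q + 1)))"
      by (simp add: of_nat_diff) algebra
    then show ?thesis by (rule of_nat_eq_iff[THEN iffD1])
  qed
  moreover have "0 < (q^3 - q) * (q^3 - q^2)"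
    using card_field_ge_2[where 'a='a] power_strict_increasing[of 1 3 q] power_strict_increasing[of 2 3 q]
    unfolding q_def by simp
  ultimately show ?thesis by (simp only: mult_le_cancel1 simp_thms)
qed

lemma card_solids_through_plane_le:
  fixes E :: "'a::{field,finite} vec7 set"
  assumes "vec.subspace E" "vec.dim E = 3"
  defines "q \<equiv> CARD('a)"
  shows "card {S. is_solid S \<and> E \<subseteq> S} \<le> q^3 + q^2 + q + 1"
proof -
  have q2: "2 \<le> q" unfolding q_def by (rule card_field_ge_2)
  obtain B where B: "B \<subseteq> E" "vec.independent B" "E \<subseteq> vec.span B" "card B = vec.dim E"
    using vec.basis_exists[of E] by blast
  have "{S. is_solid S \<and> E \<subseteq> S} \<subseteq> {U. vec.subspace U \<and> vec.dim U = Suc (card B) \<and> B \<subseteq> U \<and> U \<subseteq> UNIV}"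
    using B(1,4) assms(2) unfolding is_solid_def psub_of_dim_def by force
  then have "card {S. is_solid S \<and> E \<subseteq> S}
      \<le> card {U. vec.subspace U \<and> vec.dim U = Suc (card B) \<and> B \<subseteq> U \<and> U \<subseteq> UNIV}"
    by (rule card_mono[rotated]) simp
  then have "(q^4 - q^3) * card {S. is_solid S \<and> E \<subseteq> S}
      \<le> (q^4 - q^3) * card {U. vec.subspace U \<and> vec.dim U = Suc (card B) \<and> B \<subseteq> U \<and> U \<subseteq> UNIV}"
    by (rule mult_le_mono2)
  also have "\<dots> \<le> q^7 - q^3"
    using card_subspaces_extending_independent_le[of UNIV B] B(2,4) assms(2)
    unfolding q_def by (simp add: card_cart_basis)
  also have "q^7 - q^3 = (q^4 - q^3) * (q^3 + q^2 + q + 1)"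
  proof -
    have "q^3 \<le> q^7" "q^3 \<le> q^4" using q2 power_increasing[of 3 7 q] power_increasing[of 3 4 q] by simp_all
    then have "int (q^7 - q^3) = int ((q^4 - q^3) * (q^3 + q^2 + q + 1))"
      by (simp add: of_nat_diff) algebra
    then show ?thesis by (rule of_nat_eq_iff[THEN iffD1])
  qed
  finally have "(q^4 - q^3) * card {S. is_solid S \<and> E \<subseteq> S} \<le> (q^4 - q^3) * (q^3 + q^2 + q + 1)" .
  moreover have "0 < q^4 - q^3" using q2 power_strict_increasing[of 3 4 q] by simp
  ultimately show ?thesis by (simp only: mult_le_cancel1 simp_thms)
qed

section \<open>Three planes through a point\<close>

lemma dim_span_Un:
  fixes U W :: "('a::field^'n) set"
  assumes "vec.subspace U" "vec.subspace W"
  shows "vec.dim (vec.span (U \<union> W)) + vec.dim (U \<inter> W) = vec.dim U + vec.dim W"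
  using vec.dim_sums_Int[OF assms]
    vec.span_Un[of U W, unfolded vec.span_eq_iff[THEN iffD2, OF assms(1)]
      vec.span_eq_iff[THEN iffD2, OF assms(2)]]
  by simp

lemma dim_add_dim_Int_le:
  fixes E S U :: "('a::field^'n) set"
  assumes "vec.subspace E" "vec.subspace S" "vec.subspace U" "E \<subseteq> S" "E \<inter> U = {0}"
  shows "vec.dim E + vec.dim (S \<inter> U) \<le> vec.dim S"
proof -
  have SU: "vec.subspace (S \<inter> U)" using assms(2,3) by (rule vec.subspace_inter)
  have "{x + y |x y. x \<in> E \<and> y \<in> S \<inter> U} \<subseteq> S"
    using assms(4) vec.subspace_add[OF assms(2)] by blast
  then have "vec.dim {x + y |x y. x \<in> E \<and> y \<in> S \<inter> U} \<le> vec.dim S" by (rule vec.dim_subset)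
  moreover have "E \<inter> (S \<inter> U) = {0}" using assms(4,5) by blast
  ultimately show ?thesis using vec.dim_sums_Int[OF assms(1) SU] by simp
qed

lemma Int_span_insert_subset:
  fixes Y U :: "('a::field^'n) set"
  assumes "vec.subspace Y" "vec.subspace U" "q \<in> Y"
  shows "Y \<inter> vec.span (insert q U) \<subseteq> vec.span (insert q (Y \<inter> U))"
proof
  fix v assume v: "v \<in> Y \<inter> vec.span (insert q U)"
  moreover have "vec.span U = U" using assms(2) by simp
  ultimately obtain k where "v - k *s q \<in> U" by (auto simp: vec.span_breakdown_eq)
  moreover have "v - k *s q \<in> Y"
    using v assms(1,3) by (auto intro: vec.subspace_diff vec.subspace_scale)
  ultimately show "v \<in> vec.span (insert q (Y \<inter> U))"
    unfolding vec.span_breakdown_eq by (auto intro: vec.span_base)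
qed

lemma Int_span_insert_subset_line:
  fixes X Y U :: "('a::field^'n) set"
  assumes "vec.subspace X" "vec.subspace Y" "vec.subspace U" "X \<subseteq> Y" "X \<inter> U = {0}"
    "vec.dim Y = Suc (vec.dim X)" "v \<in> Y" "p \<in> Y \<inter> U" "p \<noteq> 0"
  shows "Y \<inter> vec.span (insert v U) \<subseteq> vec.span {v, p}"
proof -
  have YU: "vec.subspace (Y \<inter> U)" using assms(2,3) by (rule vec.subspace_inter)
  have "vec.dim (Y \<inter> U) \<le> 1" using dim_add_dim_Int_le[OF assms(1-5)] assms(6) by simp
  moreover have "vec.span {p} \<subseteq> Y \<inter> U"
    by (rule vec.span_minimal) (use assms(8) YU in auto)
  ultimately have "vec.span {p} = Y \<inter> U"
    using vec.subspace_dim_equal[OF vec.subspace_span YU, of "{p}"] assms(9) by simp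
  moreover have "vec.span {p} \<subseteq> vec.span {v, p}" by (rule vec.span_mono) auto
  ultimately have "insert v (Y \<inter> U) \<subseteq> vec.span {v, p}"
    using vec.span_base[of v "{v, p}"] by auto
  then have "vec.span (insert v (Y \<inter> U)) \<subseteq> vec.span {v, p}"
    by (rule vec.span_minimal[OF _ vec.subspace_span])
  with Int_span_insert_subset[OF assms(2,3,7)] show ?thesis by (rule order_trans)
qed

lemma independent_triple_of_planes:
  fixes E1 E3 :: "('a::field^'n) set"
  assumes "vec.subspace E1" "vec.subspace E3" "q \<notin> vec.span (E1 \<union> E3)"
    "r1 \<in> E1 - E3" "r3 \<in> E3 - E1"
  shows "vec.independent {q, r1, r3}" "card {q, r1, r3} = 3"
proof -
  have "r3 \<noteq> 0" using assms(1,5) vec.subspace_0 by blast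
  moreover have "vec.span {r3} \<subseteq> E3" using assms(2,5) vec.span_minimal by blast
  then have "r1 \<notin> vec.span {r3}" using assms(4) by blast
  ultimately have "vec.independent {r1, r3}" "card {r1, r3} = 2"
    using independent_insert_card[of "{r3}" r1] by auto
  moreover have "vec.span {r1, r3} \<subseteq> vec.span (E1 \<union> E3)"
    using assms(4,5) by (intro vec.span_mono) auto
  ultimately show "vec.independent {q, r1, r3}" "card {q, r1, r3} = 3"
    using independent_insert_card[of "{r1, r3}" q] assms(3) by auto
qed

lemma plane_not_subset_span_insert_insert:
  fixes E1 E2 :: "('a::field^'n) set"
  assumes "vec.subspace E1" "vec.subspace E2" "vec.dim E1 = 3" "vec.dim E2 = 3"
    "vec.dim (E1 \<inter> E2) = 1" "q \<notin> vec.span (E1 \<union> E2)"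
  shows "\<not> E1 \<subseteq> vec.span (insert q (insert r E2))"
proof
  define W where "W = vec.span (insert q (insert r E2))"
  assume "E1 \<subseteq> W"
  moreover have "E2 \<subseteq> W" unfolding W_def by (meson subset_insertI order_trans vec.span_superset)
  ultimately have sub: "vec.span (E1 \<union> E2) \<subseteq> W" unfolding W_def by (simp add: vec.span_minimal)
  have "vec.dim W \<le> 5"
    using vec.dim_insert[of q "insert r E2"] vec.dim_insert[of r E2] assms(4)
    unfolding W_def vec.dim_span by (auto split: if_splits)
  then have "vec.span (E1 \<union> E2) = W"
    using vec.subspace_dim_equal[OF _ _ sub] dim_span_Un[OF assms(1,2)] assms(3-5)
    unfolding W_def by simp
  moreover have "q \<in> W" unfolding W_def by (simp add: vec.span_base)
  ultimately show False using assms(6) by simp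
qed

lemma solid_eq_span_or_exchange:
  fixes Y :: "('a::field^'n) set"
  assumes "vec.subspace Y" "vec.dim Y = 4" "{q, r1, r2, r3} \<subseteq> Y"
    "vec.independent {q, r1, r3}" "card {q, r1, r3} = 3" "r2 \<notin> vec.span {q, r3}"
  shows "Y = vec.span {q, r1, r2, r3} \<or> r1 \<in> vec.span {q, r2, r3}"
proof (cases "r2 \<in> vec.span {q, r1, r3}")
  case True
  then have "r2 \<in> vec.span (insert r1 {q, r3})" by (simp add: insert_commute)
  then have "r1 \<in> vec.span (insert r2 {q, r3})" using assms(6) by (rule vec.in_span_insert)
  then show ?thesis by (simp add: insert_commute)
next
  case False
  then have "vec.independent (insert r2 {q, r1, r3})" "card (insert r2 {q, r1, r3}) = 4"
    using independent_insert_card[OF assms(4)] assms(5) by auto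
  then have "vec.span (insert r2 {q, r1, r3}) = Y"
    using span_eq_subspace_of_card_eq_dim[OF assms(1)] assms(2,3) by auto
  then show ?thesis by (simp add: insert_commute)
qed

lemma solid_meeting_three_planes_cases:
  fixes E1 E2 E3 P S1 X Y :: "('a::field^'n) set"
  assumes P: "P = vec.span {p}" "p \<noteq> 0" "P \<subseteq> E1" "P \<subseteq> E2" "P \<subseteq> E3"
    and E: "vec.subspace E1" "vec.subspace E2" "vec.subspace E3"
    and meet: "E1 \<inter> E3 = P" "E2 \<inter> E3 = P"
    and v: "v \<notin> vec.span (E1 \<union> E3)" "v \<notin> vec.span (E2 \<union> E3)"
    and S1: "vec.subspace S1" "E1 \<subseteq> S1"
    and X: "vec.subspace X" "vec.dim X = 3" "X \<subseteq> Y" "X \<inter> S1 = {0}"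
    and Y: "vec.subspace Y" "vec.dim Y = 4" "v \<in> Y"
      "E1 \<inter> Y \<noteq> {0}" "E2 \<inter> Y \<noteq> {0}" "E3 \<inter> Y \<noteq> {0}"
  shows "p \<in> Y \<and> Y \<inter> vec.span (insert v S1) \<subseteq> vec.span {v, p}
    \<or> (\<exists>r1 \<in> E1 - P. \<exists>r2 \<in> E2 - P. \<exists>r3 \<in> E3 - P. Y = vec.span {v, r1, r2, r3})
    \<or> (\<exists>r1 \<in> E1 - P. \<exists>r3 \<in> E3 - P. r1 \<in> vec.span (insert v (insert r3 E2)) \<and> r1 \<in> Y \<and> r3 \<in> Y)"
proof (cases "p \<in> Y")
  case True
  have "p \<in> S1" using P(1,3) S1(2) vec.span_base by blast
  then show ?thesis
    using True Int_span_insert_subset_line[OF X(1) Y(1) S1(1) X(3,4) _ Y(3), of p] X(2) Y(2) P(2)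
    by simp
next
  case False
  have "r \<notin> P" if "r \<in> Y" "r \<noteq> 0" for r
  proof
    assume "r \<in> P"
    then obtain k where "r = k *s p" using P(1) vec.span_singleton by auto
    then show False using that scale_mem_subspace_iff[OF Y(1)] False by (cases "k = 0") auto
  qed
  note notP = this
  have ex: "\<exists>r \<in> E - P. r \<in> Y" if E': "vec.subspace E" "E \<inter> Y \<noteq> {0}" for E
  proof -
    obtain r where "r \<in> E" "r \<in> Y" "r \<noteq> 0"
      using E'(2) vec.subspace_0[OF E'(1)] vec.subspace_0[OF Y(1)] by blast
    then show ?thesis using notP by blast
  qed
  obtain r1 r2 r3 where r: "r1 \<in> E1 - P" "r2 \<in> E2 - P" "r3 \<in> E3 - P" "{v, r1, r2, r3} \<subseteq> Y"
    using ex[OF E(1) Y(4)] ex[OF E(2) Y(5)] ex[OF E(3) Y(6)] Y(3) by auto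
  have r': "r1 \<in> E1 - E3" "r2 \<in> E2 - E3" "r3 \<in> E3 - E1" "r3 \<in> E3 - E2"
    using r(1-3) meet by blast+
  note ind13 = independent_triple_of_planes[OF E(1,3) v(1) r'(1,3)]
  have "v \<notin> E2" using v(2) vec.span_superset by blast
  then have "vec.independent (insert r2 {v, r3})" "r2 \<notin> {v, r3}"
    using independent_triple_of_planes(1)[OF E(2,3) v(2) r'(2,4)] r'(2,4)
    by (auto simp: insert_commute)
  then have "r2 \<notin> vec.span {v, r3}" by (simp add: vec.independent_insert)
  then have "Y = vec.span {v, r1, r2, r3} \<or> r1 \<in> vec.span {v, r2, r3}"
    using solid_eq_span_or_exchange[OF Y(1,2) r(4) ind13] by blast
  moreover have "vec.span {v, r2, r3} \<subseteq> vec.span (insert v (insert r3 E2))"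
    using r(2) by (intro vec.span_mono) auto
  ultimately show ?thesis using r by blast
qed

section \<open>Counting the planes and solids of the configuration\<close>

lemma card_planes_through_vector_meeting_solid_le:
  fixes S :: "'a::{field,finite} vec7 set"
  assumes S: "vec.subspace S" "vec.dim S = 4" "v \<notin> S"
  defines "q \<equiv> CARD('a)"
  shows "card {E. is_plane E \<and> v \<in> E \<and> E \<inter> S \<noteq> {0} \<and> \<not> E \<subseteq> vec.span (insert v S)}
    \<le> (q^3 + q^2 + q + 1) * (q^4 + q^3)"
proof -
  define V where "V = vec.span (insert v S)"
  define PP where "PP = {E. is_plane E \<and> v \<in> E \<and> E \<inter> S \<noteq> {0} \<and> \<not> E \<subseteq> V}"
  let ?f = "\<lambda>(r, x). vec.span (insert x {v, r})"
  have q2: "2 \<le> q" unfolding q_def by (rule card_field_ge_2)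
  have V: "vec.subspace V" "vec.dim V = 5" "insert v S \<subseteq> V"
    using dim_span_insert_subspace[OF S(1,3)] S(2) vec.span_superset[of "insert v S"]
    unfolding V_def by simp_all
  have "(q - 1) * (q^3 - q^2) \<le> card {t \<in> (S - {0}) \<times> (UNIV - V). ?f t = E}"
    if "E \<in> PP" for E
  proof -
    have E: "vec.subspace E" "vec.dim E = 3" "v \<in> E" "\<not> E \<subseteq> V" "E \<inter> S \<noteq> {0}"
      using that unfolding PP_def is_plane_def psub_of_dim_def by auto
    obtain r where r: "r \<in> E" "r \<in> S" "r \<noteq> 0" using E(1,5) S(1) vec.subspace_0 by blast
    have "card (E \<inter> V) \<le> q^2"
      using card_proper_subspace_le[OF E(1) vec.subspace_inter[OF E(1) V(1)]] E(2,4)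
      unfolding q_def by auto
    then have EV: "q^3 - q^2 \<le> card (E - V)"
      using card_subspace[OF E(1)] E(2) unfolding q_def by (simp add: card_Diff_subset_Int Diff_Int)
    have sub: "(\<lambda>(c, x). (c *s r, x)) ` ((UNIV - {0}) \<times> (E - V))
                   \<subseteq> {t \<in> (S - {0}) \<times> (UNIV - V). ?f t = E}"
    proof
      fix t assume "t \<in> (\<lambda>(c, x). (c *s r, x)) ` ((UNIV - {0}) \<times> (E - V))"
      then obtain c :: 'a and x where t: "t = (c *s r, x)" and c: "c \<noteq> 0" and x: "x \<in> E" "x \<notin> V"
        by auto
      have cr: "c *s r \<in> S" "c *s r \<in> E" "c *s r \<noteq> 0"
        using c r S(1) E(1) by (auto intro: vec.subspace_scale)
      have "v \<notin> vec.span {c *s r}" using cr(1) S(1,3) vec.span_minimal by blast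
      moreover have "x \<notin> vec.span {v, c *s r}"
        using x cr(1) V vec.span_minimal[of "{v, c *s r}" V] by blast
      ultimately have "?f (c *s r, x) = E"
        using span_extension_pair_eq[OF E(1), of "{c *s r}" v x] E(2,3) cr x by auto
      then show "t \<in> {t \<in> (S - {0}) \<times> (UNIV - V). ?f t = E}"
        using cr x t by simp
    qed
    have "inj_on (\<lambda>(c, x). (c *s r, x)) ((UNIV - {0}) \<times> (E - V))"
      using r(3) by (auto intro!: inj_onI)
    then have "card ((UNIV - {0::'a}) \<times> (E - V)) \<le> card {t \<in> (S - {0}) \<times> (UNIV - V). ?f t = E}"
      using sub by (rule card_inj_on_le) simp
    moreover have "(q - 1) * (q^3 - q^2) \<le> card ((UNIV - {0::'a}) \<times> (E - V))"
      using EV by (simp add: card_cartesian_product card_Diff_subset q_def)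
    ultimately show ?thesis by linarith
  qed
  then have "(q - 1) * (q^3 - q^2) * card PP \<le> (q^4 - 1) * (q^7 - q^5)"
    using card_mult_le_by_fibres[of "(S - {0}) \<times> (UNIV - V)" PP _ ?f]
      card_subspace[OF S(1)] card_subspace[OF V(1)] S(2) V(2) vec.subspace_0[OF S(1)]
    by (simp add: card_cartesian_product card_Diff_subset q_def)
  moreover have "(q^4 - 1) * (q^7 - q^5) = (q - 1) * (q^3 - q^2) * ((q^3 + q^2 + q + 1) * (q^4 + q^3))"
  proof -
    have "1 \<le> q^4" "q^5 \<le> q^7" "1 \<le> q" "q^2 \<le> q^3" using q2 by (auto intro: power_increasing)
    then have "int ((q^4 - 1) * (q^7 - q^5))
               = int ((q - 1) * (q^3 - q^2) * ((q^3 + q^2 + q + 1) * (q^4 + q^3)))"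
      by (simp add: of_nat_diff) algebra
    then show ?thesis by (rule of_nat_eq_iff[THEN iffD1])
  qed
  moreover have "0 < (q - 1) * (q^3 - q^2)"
    using q2 by (auto intro: power_strict_increasing)
  ultimately show ?thesis unfolding PP_def V_def by (simp only: mult_le_cancel1 simp_thms)
qed

lemma card_solids_through_line_meeting_subspace_in_line_le:
  fixes V B :: "'a::{field,finite} vec7 set"
  assumes V: "vec.subspace V" "vec.dim V = 5" and B: "B \<subseteq> V" "vec.independent B" "card B = 2"
  defines "q \<equiv> CARD('a)"
  shows "card {S. is_solid S \<and> B \<subseteq> S \<and> S \<inter> V \<subseteq> vec.span B} \<le> q^6 + q^5"
proof -
  define SS where "SS = {S. is_solid S \<and> B \<subseteq> S \<and> S \<inter> V \<subseteq> vec.span B}"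
  let ?f = "\<lambda>(x, y). vec.span (insert y (insert x B))"
  have q2: "2 \<le> q" unfolding q_def by (rule card_field_ge_2)
  have spanB: "vec.span B \<subseteq> V" using B(1) V(1) vec.span_minimal by blast
  have cardV: "card (UNIV - V) = q^7 - q^5"
    using card_subspace[OF V(1)] V(2) unfolding q_def by (simp add: card_Diff_subset)
  have "(q^4 - q^2) * (q^4 - q^3) \<le> card {t \<in> (UNIV - V) \<times> (UNIV - V). ?f t = S}"
    if "S \<in> SS" for S
  proof -
    have S: "vec.subspace S" "vec.dim S = 4" "B \<subseteq> S" "S \<inter> V \<subseteq> vec.span B"
      using that unfolding SS_def is_solid_def psub_of_dim_def by auto
    have "card (S \<inter> V) \<le> q^2"
      using card_mono[OF _ S(4)] card_span_independent[OF B(2)] B(3) unfolding q_def by simp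
    then have "q^4 - q^2 \<le> card (S - V)"
      using card_subspace[OF S(1)] S(2) unfolding q_def by (simp add: card_Diff_subset_Int Diff_Int)
    moreover have "card (S - vec.span (insert x B)) = q^4 - q^3" if "x \<in> S - V" for x
    proof -
      have "x \<notin> vec.span B" using that spanB by blast
      then show ?thesis
        using card_subspace_diff_span[OF S(1), of "insert x B"] independent_insert_card[OF B(2), of x]
          S(2,3) B(3) that unfolding q_def by auto
    qed
    ultimately have "(q^4 - q^2) * (q^4 - q^3) \<le> card (SIGMA x:S - V. S - vec.span (insert x B))"
      by (simp add: card_Sigma_const)
    also have "\<dots> \<le> card {t \<in> (UNIV - V) \<times> (UNIV - V). ?f t = S}"
    proof (rule card_mono)
      show "(SIGMA x:S - V. S - vec.span (insert x B)) \<subseteq> {t \<in> (UNIV - V) \<times> (UNIV - V). ?f t = S}"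
      proof
        fix t assume "t \<in> (SIGMA x:S - V. S - vec.span (insert x B))"
        then obtain x y where t: "t = (x, y)" and x: "x \<in> S" "x \<notin> V"
          and y: "y \<in> S" "y \<notin> vec.span (insert x B)" by auto
        have "vec.span B \<subseteq> vec.span (insert x B)" by (rule vec.span_mono) auto
        then have "y \<notin> V" using y S(4) by blast
        moreover have "vec.span (insert y (insert x B)) = S"
          using span_extension_pair_eq[OF S(1,3) B(2)] S(2) B(3) x y spanB by auto
        ultimately show "t \<in> {t \<in> (UNIV - V) \<times> (UNIV - V). ?f t = S}" using x t by simp
      qed
    qed simp
    finally show ?thesis .
  qed
  then have "(q^4 - q^2) * (q^4 - q^3) * card SS \<le> (q^7 - q^5) * (q^7 - q^5)"
    using card_mult_le_by_fibres[of "(UNIV - V) \<times> (UNIV - V)" SS _ ?f] cardV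
    by (simp add: card_cartesian_product)
  moreover have "(q^7 - q^5) * (q^7 - q^5) = (q^4 - q^2) * (q^4 - q^3) * (q^6 + q^5)"
  proof -
    have "q^5 \<le> q^7" "q^2 \<le> q^4" "q^3 \<le> q^4" using q2 by (auto intro: power_increasing)
    then have "int ((q^7 - q^5) * (q^7 - q^5)) = int ((q^4 - q^2) * (q^4 - q^3) * (q^6 + q^5))"
      by (simp add: of_nat_diff) algebra
    then show ?thesis by (rule of_nat_eq_iff[THEN iffD1])
  qed
  moreover have "0 < (q^4 - q^2) * (q^4 - q^3)"
    using q2 by (auto intro: power_strict_increasing)
  ultimately show ?thesis unfolding SS_def by (simp only: mult_le_cancel1 simp_thms)
qed

lemma card_spans_meeting_three_planes_le:
  fixes E1 E2 E3 P :: "('a::{field,finite}^'n) set"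
  assumes P: "vec.subspace P" "vec.dim P = 1"
    and E: "vec.subspace E1" "vec.dim E1 = 3" "P \<subseteq> E1" "vec.subspace E2" "vec.dim E2 = 3" "P \<subseteq> E2"
      "vec.subspace E3" "vec.dim E3 = 3" "P \<subseteq> E3"
  defines "q \<equiv> CARD('a)"
  shows "card {vec.span {v, r1, r2, r3} |r1 r2 r3. r1 \<in> E1 - P \<and> r2 \<in> E2 - P \<and> r3 \<in> E3 - P}
    \<le> (q^2 + q)^3"
proof -
  define T where "T = (E1 - P) \<times> (E2 - P) \<times> (E3 - P)"
  define SS where "SS = {vec.span {v, r1, r2, r3} |r1 r2 r3. r1 \<in> E1 - P \<and> r2 \<in> E2 - P \<and> r3 \<in> E3 - P}"
  let ?f = "\<lambda>(r1, r2, r3). vec.span {v, r1, r2, r3}"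
  let ?U = "UNIV - {0::'a}"
  have q2: "2 \<le> q" unfolding q_def by (rule card_field_ge_2)
  have scale: "c *s r \<in> E - P" if "vec.subspace E" "r \<in> E - P" "c \<noteq> 0" for E r and c :: 'a
    using that scale_mem_subspace_iff[OF P(1)] vec.subspace_scale by blast
  have fibre: "(q - 1) * (q - 1) * (q - 1) \<le> card {t \<in> T. ?f t = S}" if "S \<in> SS" for S
  proof -
    obtain r1 r2 r3 where r: "r1 \<in> E1 - P" "r2 \<in> E2 - P" "r3 \<in> E3 - P"
      and S: "S = vec.span {v, r1, r2, r3}" using \<open>S \<in> SS\<close> unfolding SS_def by blast
    let ?g = "\<lambda>(c1, c2, c3). (c1 *s r1, c2 *s r2, c3 *s r3)"
    have "?g ` (?U \<times> ?U \<times> ?U) \<subseteq> {t \<in> T. ?f t = S}"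
    proof
      fix t assume "t \<in> ?g ` (?U \<times> ?U \<times> ?U)"
      then obtain c1 c2 c3 :: 'a where t: "t = (c1 *s r1, c2 *s r2, c3 *s r3)"
        and c: "c1 \<noteq> 0" "c2 \<noteq> 0" "c3 \<noteq> 0" by auto
      have "vec.span {v, c1 *s r1, c2 *s r2, c3 *s r3} = S"
        unfolding S vec.span_eq
      proof
        show "{v, c1 *s r1, c2 *s r2, c3 *s r3} \<subseteq> vec.span {v, r1, r2, r3}"
          by (simp add: vec.span_base vec.span_scale)
        show "{v, r1, r2, r3} \<subseteq> vec.span {v, c1 *s r1, c2 *s r2, c3 *s r3}"
          using scale_mem_subspace_iff[OF vec.subspace_span c(1), of r1, symmetric]
            scale_mem_subspace_iff[OF vec.subspace_span c(2), of r2, symmetric]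
            scale_mem_subspace_iff[OF vec.subspace_span c(3), of r3, symmetric]
          by (simp add: vec.span_base)
      qed
      then show "t \<in> {t \<in> T. ?f t = S}"
        using t c r scale E(1,4,7) unfolding T_def by auto
    qed
    moreover have "r1 \<noteq> 0" "r2 \<noteq> 0" "r3 \<noteq> 0" using r vec.subspace_0[OF P(1)] by auto
    then have "inj_on ?g (?U \<times> ?U \<times> ?U)" by (auto intro!: inj_onI)
    ultimately have "card (?U \<times> ?U \<times> ?U) \<le> card {t \<in> T. ?f t = S}"
      by (intro card_inj_on_le) simp_all
    then show ?thesis by (simp add: card_cartesian_product card_Diff_subset q_def)
  qed
  have "(q - 1) * (q - 1) * (q - 1) * card SS \<le> card T"
    by (rule card_mult_le_by_fibres[OF _ _ fibre]) auto
  moreover have "card T = (q^3 - q) * (q^3 - q) * (q^3 - q)"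
  proof -
    have "card (E - P) = q^3 - q" if "vec.subspace E" "vec.dim E = 3" "P \<subseteq> E" for E
      using card_subspace[OF that(1)] card_subspace[OF P(1)] that(2,3) P(2)
      unfolding q_def by (simp add: card_Diff_subset)
    then show ?thesis using E unfolding T_def by (simp add: card_cartesian_product)
  qed
  moreover have "(q^3 - q) * (q^3 - q) * (q^3 - q) = (q - 1) * (q - 1) * (q - 1) * (q^2 + q)^3"
  proof -
    have "q \<le> q^3" "1 \<le> q" using q2 power_increasing[of 1 3 q] by simp_all
    then have "int ((q^3 - q) * (q^3 - q) * (q^3 - q)) = int ((q - 1) * (q - 1) * (q - 1) * (q^2 + q)^3)"
      by (simp add: of_nat_diff) algebra
    then show ?thesis by (rule of_nat_eq_iff[THEN iffD1])
  qed
  moreover have "0 < (q - 1) * (q - 1) * (q - 1)" using q2 by simp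
  ultimately show ?thesis unfolding SS_def by (simp only: mult_le_cancel1 simp_thms)
qed

lemma card_plane_Int_span_insert_insert_diff_le:
  fixes E1 E2 P :: "('a::{field,finite}^'n) set"
  assumes "vec.subspace P" "vec.dim P = 1"
    and "vec.subspace E1" "vec.dim E1 = 3" "vec.subspace E2" "vec.dim E2 = 3" "E1 \<inter> E2 = P"
    and "v \<notin> vec.span (E1 \<union> E2)"
  shows "card (E1 \<inter> vec.span (insert v (insert r E2)) - P) \<le> CARD('a)^2 - CARD('a)"
proof -
  have "E1 \<inter> vec.span (insert v (insert r E2)) \<subset> E1"
    using plane_not_subset_span_insert_insert[OF assms(3,5,4,6) _ assms(8)] assms(2,7) by auto
  then have "card (E1 \<inter> vec.span (insert v (insert r E2))) \<le> CARD('a)^2"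
    using card_proper_subspace_le[OF assms(3) vec.subspace_inter[OF assms(3) vec.subspace_span]] assms(4)
    by auto
  moreover have "P \<subseteq> E1 \<inter> vec.span (insert v (insert r E2))"
    using assms(7) vec.span_superset[of "insert v (insert r E2)"] by auto
  ultimately show ?thesis using card_subspace[OF assms(1)] assms(2) by (simp add: card_Diff_subset)
qed

lemma card_exchange_planes_le:
  fixes E1 E2 E3 P :: "('a::{field,finite}^'n) set"
  assumes P: "vec.subspace P" "vec.dim P = 1" "P \<subseteq> E2"
    and E: "vec.subspace E1" "vec.dim E1 = 3" "vec.subspace E2" "vec.dim E2 = 3"
      "vec.subspace E3" "vec.dim E3 = 3"
    and meet: "E1 \<inter> E2 = P" "E1 \<inter> E3 = P"
    and v: "v \<notin> vec.span (E1 \<union> E2)"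
  defines "q \<equiv> CARD('a)"
  shows "card {vec.span {v, r1, r3} |r1 r3. r1 \<in> E1 - P \<and> r3 \<in> E3 - P
      \<and> r1 \<in> vec.span (insert v (insert r3 E2))} \<le> q^3 + q^2"
proof -
  define W where "W r3 = vec.span (insert v (insert r3 E2))" for r3
  define PP where "PP = {vec.span {v, r1, r3} |r1 r3. r1 \<in> E1 - P \<and> r3 \<in> E3 - P \<and> r1 \<in> W r3}"
  define T where "T = (SIGMA r3:E3 - P. E1 \<inter> W r3 - P)"
  let ?f = "\<lambda>(r3, r1). vec.span {v, r1, r3}"
  let ?U = "UNIV - {0::'a}"
  have q2: "2 \<le> q" unfolding q_def by (rule card_field_ge_2)
  have cardT: "card T \<le> (q^3 - q) * (q^2 - q)"
  proof -
    have "card T \<le> card (E3 - P) * (q^2 - q)"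
      using card_plane_Int_span_insert_insert_diff_le[OF P(1,2) E(1-4) meet(1) v]
      unfolding T_def W_def q_def by (intro card_Sigma_le) auto
    moreover have "P \<subseteq> E3" using meet(2) by blast
    then have "card (E3 - P) = q^3 - q"
      using card_subspace[OF E(5)] E(6) card_subspace[OF P(1)] P(2) unfolding q_def
      by (simp add: card_Diff_subset)
    ultimately show ?thesis by simp
  qed
  have fibre: "(q - 1) * (q - 1) \<le> card {t \<in> T. ?f t = L}" if L: "L \<in> PP" for L
  proof -
    obtain r1 r3 where r: "r1 \<in> E1 - P" "r3 \<in> E3 - P" "r1 \<in> W r3" and L: "L = vec.span {v, r1, r3}"
      using L unfolding PP_def by blast
    let ?g = "\<lambda>(c3, c1). (c3 *s r3, c1 *s r1)"
    have "?g ` (?U \<times> ?U) \<subseteq> {t \<in> T. ?f t = L}"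
    proof
      fix t assume "t \<in> ?g ` (?U \<times> ?U)"
      then obtain c1 c3 :: 'a where t: "t = (c3 *s r3, c1 *s r1)" and c: "c1 \<noteq> 0" "c3 \<noteq> 0" by auto
      have scaled: "c1 *s r1 \<in> E1 - P" "c3 *s r3 \<in> E3 - P"
        using r(1,2) c scale_mem_subspace_iff[OF P(1)] E(1,5) vec.subspace_scale by blast+
      have "vec.span {v, c1 *s r1, c3 *s r3} = L"
        unfolding L vec.span_eq
      proof
        show "{v, c1 *s r1, c3 *s r3} \<subseteq> vec.span {v, r1, r3}"
          by (simp add: vec.span_base vec.span_scale)
        show "{v, r1, r3} \<subseteq> vec.span {v, c1 *s r1, c3 *s r3}"
          using scale_mem_subspace_iff[OF vec.subspace_span c(1), of r1, symmetric]
            scale_mem_subspace_iff[OF vec.subspace_span c(2), of r3, symmetric]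
          by (simp add: vec.span_base)
      qed
      moreover have "W (c3 *s r3) = W r3"
        unfolding W_def using span_insert_scale[OF c(2), of r3 "insert v E2"] by (simp add: insert_commute)
      then have "c1 *s r1 \<in> W (c3 *s r3)" using r(3) unfolding W_def by (simp add: vec.span_scale)
      ultimately show "t \<in> {t \<in> T. ?f t = L}" using scaled t unfolding T_def by simp
    qed
    moreover have "r1 \<noteq> 0" "r3 \<noteq> 0" using r vec.subspace_0[OF P(1)] by auto
    then have "inj_on ?g (?U \<times> ?U)" by (auto intro!: inj_onI)
    ultimately have "card (?U \<times> ?U) \<le> card {t \<in> T. ?f t = L}"
      by (intro card_inj_on_le) simp_all
    then show ?thesis by (simp add: card_cartesian_product card_Diff_subset q_def)
  qed
  have "(q - 1) * (q - 1) * card PP \<le> card T"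
    by (rule card_mult_le_by_fibres[OF _ _ fibre]) auto
  also note cardT
  also have "(q^3 - q) * (q^2 - q) = (q - 1) * (q - 1) * (q^3 + q^2)"
  proof -
    have "q \<le> q^3" "q \<le> q^2" "1 \<le> q"
      using q2 power_increasing[of 1 3 q] power_increasing[of 1 2 q] by simp_all
    then have "int ((q^3 - q) * (q^2 - q)) = int ((q - 1) * (q - 1) * (q^3 + q^2))"
      by (simp add: of_nat_diff) algebra
    then show ?thesis by (rule of_nat_eq_iff[THEN iffD1])
  qed
  finally have "(q - 1) * (q - 1) * card PP \<le> (q - 1) * (q - 1) * (q^3 + q^2)" .
  moreover have "0 < (q - 1) * (q - 1)" using q2 by simp
  ultimately show ?thesis unfolding PP_def W_def by (simp only: mult_le_cancel1 simp_thms)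
qed

lemma card_solids_through_vector_exchange_le:
  fixes E1 E2 E3 P :: "'a::{field,finite} vec7 set"
  assumes P: "vec.subspace P" "vec.dim P = 1" "P \<subseteq> E2"
    and E: "vec.subspace E1" "vec.dim E1 = 3" "vec.subspace E2" "vec.dim E2 = 3"
      "vec.subspace E3" "vec.dim E3 = 3"
    and meet: "E1 \<inter> E2 = P" "E1 \<inter> E3 = P"
    and v: "v \<notin> vec.span (E1 \<union> E2)" "v \<notin> vec.span (E1 \<union> E3)"
  defines "q \<equiv> CARD('a)"
  shows "card {S. is_solid S \<and> v \<in> S \<and> (\<exists>r1 \<in> E1 - P. \<exists>r3 \<in> E3 - P.
      r1 \<in> vec.span (insert v (insert r3 E2)) \<and> r1 \<in> S \<and> r3 \<in> S)}
    \<le> (q^3 + q^2) * (q^3 + q^2 + q + 1)"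
proof -
  define PP where "PP = {vec.span {v, r1, r3} |r1 r3. r1 \<in> E1 - P \<and> r3 \<in> E3 - P
      \<and> r1 \<in> vec.span (insert v (insert r3 E2))}"
  define SS where "SS = {S. is_solid S \<and> v \<in> S \<and> (\<exists>r1 \<in> E1 - P. \<exists>r3 \<in> E3 - P.
      r1 \<in> vec.span (insert v (insert r3 E2)) \<and> r1 \<in> S \<and> r3 \<in> S)}"
  have "SS \<subseteq> (\<Union>L \<in> PP. {S. is_solid S \<and> L \<subseteq> S})"
  proof
    fix S assume "S \<in> SS"
    then obtain r1 r3 where S: "is_solid S" "{v, r1, r3} \<subseteq> S"
      and r: "r1 \<in> E1 - P" "r3 \<in> E3 - P" "r1 \<in> vec.span (insert v (insert r3 E2))"
      unfolding SS_def by blast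
    have "vec.span {v, r1, r3} \<subseteq> S"
      using S unfolding is_solid_def psub_of_dim_def by (simp add: vec.span_minimal)
    then show "S \<in> (\<Union>L \<in> PP. {S. is_solid S \<and> L \<subseteq> S})"
      using S(1) r unfolding PP_def by blast
  qed
  then have "card SS \<le> card (\<Union>L \<in> PP. {S. is_solid S \<and> L \<subseteq> S})"
    by (rule card_mono[rotated]) simp
  also have "\<dots> \<le> (\<Sum>L \<in> PP. card {S. is_solid S \<and> L \<subseteq> S})"
    by (rule card_UN_le) simp
  also have "\<dots> \<le> card PP * (q^3 + q^2 + q + 1)"
  proof -
    have "card {S. is_solid S \<and> L \<subseteq> S} \<le> q^3 + q^2 + q + 1" if "L \<in> PP" for L
    proof -
      obtain r1 r3 where r: "r1 \<in> E1 - E3" "r3 \<in> E3 - E1" and L: "L = vec.span {v, r1, r3}"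
        using \<open>L \<in> PP\<close> meet(2) unfolding PP_def by blast
      then have "vec.dim L = 3"
        using vec.dim_eq_card_independent[OF independent_triple_of_planes(1)[OF E(1,5) v(2) r]]
          independent_triple_of_planes(2)[OF E(1,5) v(2) r] by simp
      then show ?thesis using card_solids_through_plane_le[of L] L unfolding q_def by simp
    qed
    then have "(\<Sum>L \<in> PP. card {S. is_solid S \<and> L \<subseteq> S}) \<le> of_nat (card PP) * (q^3 + q^2 + q + 1)"
      by (rule sum_bounded_above)
    then show ?thesis by simp
  qed
  also have "\<dots> \<le> (q^3 + q^2) * (q^3 + q^2 + q + 1)"
    using card_exchange_planes_le[OF P E meet v(1)] unfolding PP_def q_def by (rule mult_le_mono1)
  finally show ?thesis unfolding SS_def .
qed

section \<open>Flags through a point\<close>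

lemma is_pointE:
  assumes "is_point X"
  obtains x where "x \<noteq> 0" "X = vec.span {x}"
proof -
  obtain B where B: "B \<subseteq> X" "vec.independent B" "X \<subseteq> vec.span B" "card B = 1"
    using vec.basis_exists[of X] assms unfolding is_point_def psub_of_dim_def by auto
  then obtain x where "B = {x}" by (auto simp: card_1_singleton_iff)
  moreover have "vec.span B = X"
    using vec.span_subspace[OF B(1,3)] assms unfolding is_point_def psub_of_dim_def by simp
  ultimately show ?thesis using that B(2) by auto
qed

lemma plane_meets_solid_of_independent_flags:
  assumes "independent_flags C" "(X, Y) \<in> C" "(E, S) \<in> C" "X \<inter> S = {0}"
  shows "E \<inter> Y \<noteq> {0}"
proof -
  have "is_flag23 (E, S)" using assms(1,3) unfolding independent_flags_def by blast
  then have "vec.dim E = 3" "E \<subseteq> S" unfolding is_flag23_def is_plane_def psub_of_dim_def by auto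
  moreover have "E \<noteq> {0}" using \<open>vec.dim E = 3\<close> by auto
  ultimately have "(X, Y) \<noteq> (E, S)" using assms(4) by auto
  moreover have "\<not> kneser_adj (X, Y) (E, S)" using assms(1-3) unfolding independent_flags_def by blast
  ultimately show ?thesis using assms(4) unfolding kneser_adj_def by simp
qed

lemma card_flags_through_vector_meeting_solid_le:
  fixes C :: "('a::{field,finite} vec7 set \<times> 'a vec7 set) set"
  assumes flags: "\<And>F. F \<in> C \<Longrightarrow> is_flag23 F"
    and planes: "\<And>E. is_plane E \<Longrightarrow> card {S. (E, S) \<in> C} \<le> CARD('a) + 1"
    and S: "vec.subspace S" "vec.dim S = 4" "v \<notin> S"
  defines "q \<equiv> CARD('a)"
  shows "card {F \<in> C. v \<in> fst F \<and> fst F \<inter> S \<noteq> {0}}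
    \<le> (q + 1) * ((q^3 + q^2 + q + 1) * (q^4 + q^3) + (q^2 + 1) * (q^2 + q + 1))"
proof -
  define V where "V = vec.span (insert v S)"
  define PPa where "PPa = {E. is_plane E \<and> v \<in> E \<and> E \<inter> S \<noteq> {0} \<and> \<not> E \<subseteq> V}"
  define PPb where "PPb = {E. vec.subspace E \<and> vec.dim E = 3 \<and> v \<in> E \<and> E \<subseteq> V}"
  have "card {F \<in> C. v \<in> fst F \<and> fst F \<inter> S \<noteq> {0}} \<le> (q + 1) * card (PPa \<union> PPb)"
  proof (rule card_pairs_le_by_fst)
    show "fst ` {F \<in> C. v \<in> fst F \<and> fst F \<inter> S \<noteq> {0}} \<subseteq> PPa \<union> PPb"
      using flags unfolding PPa_def PPb_def is_flag23_def is_plane_def psub_of_dim_def by auto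
    show "card {S. (E, S) \<in> C} \<le> q + 1" if "E \<in> PPa \<union> PPb" for E
      using that planes unfolding PPa_def PPb_def is_plane_def psub_of_dim_def q_def by auto
  qed auto
  also have "\<dots> \<le> (q + 1) * (card PPa + card PPb)" by (rule mult_le_mono2[OF card_Un_le])
  also have "\<dots> \<le> (q + 1) * ((q^3 + q^2 + q + 1) * (q^4 + q^3) + (q^2 + 1) * (q^2 + q + 1))"
  proof -
    have "card PPa \<le> (q^3 + q^2 + q + 1) * (q^4 + q^3)"
      using card_planes_through_vector_meeting_solid_le[OF S] unfolding PPa_def V_def q_def .
    moreover have "card PPb \<le> (q^2 + 1) * (q^2 + q + 1)"
    proof -
      have "v \<noteq> 0" using S(1,3) vec.subspace_0 by blast
      moreover have "vec.subspace V" "vec.dim V = 5" "v \<in> V"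
        using dim_span_insert_subspace[OF S(1,3)] S(2) unfolding V_def by (simp_all add: vec.span_base)
      ultimately show ?thesis
        using card_planes_through_vector_in_dim5_le unfolding PPb_def q_def by blast
    qed
    ultimately show ?thesis by (intro mult_le_mono2 add_mono)
  qed
  finally show ?thesis .
qed

lemma card_flags_through_vector_missing_solid_le:
  fixes C :: "('a::{field,finite} vec7 set \<times> 'a vec7 set) set"
  assumes flags: "\<And>F. F \<in> C \<Longrightarrow> is_flag23 F"
    and solids: "\<And>S. is_solid S \<Longrightarrow> card {E. (E, S) \<in> C} \<le> CARD('a) + 1"
    and P: "P = vec.span {p}" "p \<noteq> 0" "P \<subseteq> E1" "P \<subseteq> E2" "P \<subseteq> E3"
    and E: "vec.subspace E1" "vec.dim E1 = 3" "vec.subspace E2" "vec.dim E2 = 3"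
      "vec.subspace E3" "vec.dim E3 = 3"
    and meet: "E1 \<inter> E2 = P" "E1 \<inter> E3 = P" "E2 \<inter> E3 = P"
    and v: "v \<notin> vec.span (E1 \<union> E2)" "v \<notin> vec.span (E1 \<union> E3)" "v \<notin> vec.span (E2 \<union> E3)"
    and S1: "vec.subspace S1" "vec.dim S1 = 4" "E1 \<subseteq> S1" "v \<notin> S1"
  defines "q \<equiv> CARD('a)"
  shows "card {F \<in> C. v \<in> fst F \<and> fst F \<inter> S1 = {0}
                 \<and> E1 \<inter> snd F \<noteq> {0} \<and> E2 \<inter> snd F \<noteq> {0} \<and> E3 \<inter> snd F \<noteq> {0}}
    \<le> (q + 1) * ((q^6 + q^5) + (q^2 + q)^3 + (q^3 + q^2) * (q^3 + q^2 + q + 1))"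
proof -
  define SS1 where "SS1 = {S. is_solid S \<and> {v, p} \<subseteq> S \<and> S \<inter> vec.span (insert v S1) \<subseteq> vec.span {v, p}}"
  define SS2 where "SS2 = {vec.span {v, r1, r2, r3} |r1 r2 r3. r1 \<in> E1 - P \<and> r2 \<in> E2 - P \<and> r3 \<in> E3 - P}"
  define SS3 where "SS3 = {S. is_solid S \<and> v \<in> S \<and> (\<exists>r1 \<in> E1 - P. \<exists>r3 \<in> E3 - P.
      r1 \<in> vec.span (insert v (insert r3 E2)) \<and> r1 \<in> S \<and> r3 \<in> S)}"
  have sP: "vec.subspace P" "vec.dim P = 1" using P(1,2) by simp_all
  have pS1: "p \<in> S1" using P(1,3) S1(3) vec.span_base by blast
  have "card {F \<in> C. v \<in> fst F \<and> fst F \<inter> S1 = {0}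
                 \<and> E1 \<inter> snd F \<noteq> {0} \<and> E2 \<inter> snd F \<noteq> {0} \<and> E3 \<inter> snd F \<noteq> {0}}
      \<le> (q + 1) * card (SS1 \<union> SS2 \<union> SS3)"
  proof (rule card_pairs_le_by_snd)
    show "card {E. (E, S) \<in> C} \<le> q + 1" if "S \<in> SS1 \<union> SS2 \<union> SS3" for S
    proof (cases "is_solid S")
      case False
      then have "{E. (E, S) \<in> C} = {}" using flags unfolding is_flag23_def by fastforce
      then show ?thesis by simp
    qed (use solids q_def in auto)
    show "snd ` {F \<in> C. v \<in> fst F \<and> fst F \<inter> S1 = {0}
                 \<and> E1 \<inter> snd F \<noteq> {0} \<and> E2 \<inter> snd F \<noteq> {0} \<and> E3 \<inter> snd F \<noteq> {0}}
      \<subseteq> SS1 \<union> SS2 \<union> SS3"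
    proof
      fix Y assume "Y \<in> snd ` {F \<in> C. v \<in> fst F \<and> fst F \<inter> S1 = {0}
                 \<and> E1 \<inter> snd F \<noteq> {0} \<and> E2 \<inter> snd F \<noteq> {0} \<and> E3 \<inter> snd F \<noteq> {0}}"
      then obtain X where F: "(X, Y) \<in> C" "v \<in> X" "X \<inter> S1 = {0}"
        "E1 \<inter> Y \<noteq> {0}" "E2 \<inter> Y \<noteq> {0}" "E3 \<inter> Y \<noteq> {0}" by force
      have XY: "vec.subspace X" "vec.dim X = 3" "X \<subseteq> Y" "vec.subspace Y" "vec.dim Y = 4" "is_solid Y"
        using flags[OF F(1)] unfolding is_flag23_def is_plane_def is_solid_def psub_of_dim_def by auto
      show "Y \<in> SS1 \<union> SS2 \<union> SS3"
        using solid_meeting_three_planes_cases[OF P E(1,3,5) meet(2,3) v(2,3) S1(1,3)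
            XY(1-3) F(3) XY(4,5) _ F(4-6)] F(2) XY(3,6)
        unfolding SS1_def SS2_def SS3_def by blast
    qed
  qed auto
  also have "\<dots> \<le> (q + 1) * ((q^6 + q^5) + (q^2 + q)^3 + (q^3 + q^2) * (q^3 + q^2 + q + 1))"
  proof -
    have "card SS1 \<le> q^6 + q^5"
    proof -
      have "v \<notin> vec.span {p}" using P S1(3,4) by blast
      then have "vec.independent {v, p}" "card {v, p} = 2"
        using independent_insert_card[of "{p}" v] P(2) by auto
      moreover have "vec.subspace (vec.span (insert v S1))" "vec.dim (vec.span (insert v S1)) = 5"
        "{v, p} \<subseteq> vec.span (insert v S1)"
        using dim_span_insert_subspace[OF S1(1,4)] S1(2) pS1 vec.span_base[of p "insert v S1"]
          vec.span_base[of v "insert v S1"] by auto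
      ultimately show ?thesis
        using card_solids_through_line_meeting_subspace_in_line_le unfolding SS1_def q_def by blast
    qed
    moreover have "card SS2 \<le> (q^2 + q)^3"
      using card_spans_meeting_three_planes_le[OF sP E(1,2) P(3) E(3,4) P(4) E(5,6) P(5)]
      unfolding SS2_def q_def .
    moreover have "card SS3 \<le> (q^3 + q^2) * (q^3 + q^2 + q + 1)"
      using card_solids_through_vector_exchange_le[OF sP P(4) E meet(1,2) v(1,2)]
      unfolding SS3_def q_def .
    ultimately show ?thesis
      using card_Un_le[of "SS1 \<union> SS2" SS3] card_Un_le[of SS1 SS2] by (intro mult_le_mono2) linarith
  qed
  finally show ?thesis .
qed

lemma flag_count_polynomial_le:
  fixes q :: nat
  shows "3 * ((q + 1) * ((q^3 + q^2 + q + 1) * (q^4 + q^3) + (q^2 + 1) * (q^2 + q + 1)))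
      + (q + 1) * ((q^6 + q^5) + (q^2 + q)^3 + (q^3 + q^2) * (q^3 + q^2 + q + 1))
    \<le> 3*q^8 + 12*q^7 + 21*q^6 + 28*q^5 + 26*q^4 + 18*q^3 + 12*q^2 + 8*q + 4"
proof -
  have "int (3 * ((q + 1) * ((q^3 + q^2 + q + 1) * (q^4 + q^3) + (q^2 + 1) * (q^2 + q + 1)))
      + (q + 1) * ((q^6 + q^5) + (q^2 + q)^3 + (q^3 + q^2) * (q^3 + q^2 + q + 1))
      + (q + 1) * (2*q^4 + q^3 + q^2 + q + 1))
    = int (3*q^8 + 12*q^7 + 21*q^6 + 28*q^5 + 26*q^4 + 18*q^3 + 12*q^2 + 8*q + 4)"
    by simp algebra
  then show ?thesis by (simp only: of_nat_eq_iff)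
qed

lemma card_flags_through_vector_le:
  fixes C :: "('a::{field,finite} vec7 set \<times> 'a vec7 set) set"
    and E S :: "nat \<Rightarrow> 'a vec7 set"
  assumes indep: "independent_flags C"
    and planes: "\<And>E0. is_plane E0 \<Longrightarrow> card {S0. (E0, S0) \<in> C} \<le> CARD('a) + 1"
    and solids: "\<And>S0. is_solid S0 \<Longrightarrow> card {E0. (E0, S0) \<in> C} \<le> CARD('a) + 1"
    and P: "P = vec.span {p}" "p \<noteq> 0"
    and ES: "\<And>i. i \<in> {1,2,3} \<Longrightarrow> (E i, S i) \<in> C \<and> P \<subseteq> E i"
    and meet: "\<And>i j. i \<in> {1,2,3} \<Longrightarrow> j \<in> {1,2,3} \<Longrightarrow> i \<noteq> j \<Longrightarrow> E i \<inter> E j = P"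
    and vE: "\<And>i j. i \<in> {1,2,3} \<Longrightarrow> j \<in> {1,2,3} \<Longrightarrow> v \<notin> vec.span (E i \<union> E j)"
    and vS: "\<And>i. i \<in> {1,2,3} \<Longrightarrow> v \<notin> S i"
  defines "q \<equiv> CARD('a)"
  shows "card {F \<in> C. v \<in> fst F}
    \<le> 3 * ((q + 1) * ((q^3 + q^2 + q + 1) * (q^4 + q^3) + (q^2 + 1) * (q^2 + q + 1)))
      + (q + 1) * ((q^6 + q^5) + (q^2 + q)^3 + (q^3 + q^2) * (q^3 + q^2 + q + 1))"
proof -
  have flags: "\<And>F. F \<in> C \<Longrightarrow> is_flag23 F" using indep unfolding independent_flags_def by blast
  have i: "1 \<in> {1::nat, 2, 3}" "2 \<in> {1::nat, 2, 3}" "3 \<in> {1::nat, 2, 3}" by simp_all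
  have ES': "vec.subspace (E i)" "vec.dim (E i) = 3" "vec.subspace (S i)" "vec.dim (S i) = 4"
    "E i \<subseteq> S i" if "i \<in> {1,2,3}" for i
    using ES[OF that] flags[of "(E i, S i)"]
    unfolding is_flag23_def is_plane_def is_solid_def psub_of_dim_def by auto
  define A where "A i = {F \<in> C. v \<in> fst F \<and> fst F \<inter> S i \<noteq> {0}}" for i
  define B where "B = {F \<in> C. v \<in> fst F \<and> fst F \<inter> S 1 = {0}
                 \<and> E 1 \<inter> snd F \<noteq> {0} \<and> E 2 \<inter> snd F \<noteq> {0} \<and> E 3 \<inter> snd F \<noteq> {0}}"
  have "{F \<in> C. v \<in> fst F} \<subseteq> A 1 \<union> A 2 \<union> A 3 \<union> B"
  proof
    fix F assume F: "F \<in> {F \<in> C. v \<in> fst F}"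
    show "F \<in> A 1 \<union> A 2 \<union> A 3 \<union> B"
    proof (cases "\<exists>i \<in> {1,2,3}. fst F \<inter> S i \<noteq> {0}")
      case True
      then obtain i where i: "i \<in> {1,2,3}" "fst F \<inter> S i \<noteq> {0}" by blast
      then have "F \<in> A i" using F unfolding A_def by simp
      then show ?thesis using i(1) by fastforce
    next
      case False
      have FC: "(fst F, snd F) \<in> C" using F by simp
      have "E i \<inter> snd F \<noteq> {0}" if "i \<in> {1,2,3}" for i
      proof -
        have "fst F \<inter> S i = {0}" using False that by blast
        then show ?thesis
          using plane_meets_solid_of_independent_flags[OF indep FC conjunct1[OF ES[OF that]]] by simp
      qed
      then have "F \<in> B" using F False i unfolding B_def by simp
      then show ?thesis by simp
    qed
  qed
  then have "card {F \<in> C. v \<in> fst F} \<le> card (A 1 \<union> A 2 \<union> A 3 \<union> B)"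
    by (rule card_mono[rotated]) simp
  also have "\<dots> \<le> card (A 1) + card (A 2) + card (A 3) + card B"
    using card_Un_le[of "A 1 \<union> A 2 \<union> A 3" B] card_Un_le[of "A 1 \<union> A 2" "A 3"]
      card_Un_le[of "A 1" "A 2"] by linarith
  also have "\<dots> \<le> 3 * ((q + 1) * ((q^3 + q^2 + q + 1) * (q^4 + q^3) + (q^2 + 1) * (q^2 + q + 1)))
      + (q + 1) * ((q^6 + q^5) + (q^2 + q)^3 + (q^3 + q^2) * (q^3 + q^2 + q + 1))"
  proof -
    have "card (A i) \<le> (q + 1) * ((q^3 + q^2 + q + 1) * (q^4 + q^3) + (q^2 + 1) * (q^2 + q + 1))"
      if "i \<in> {1,2,3}" for i
      using card_flags_through_vector_meeting_solid_le[OF flags planes ES'(3,4)[OF that] vS[OF that]]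
      unfolding A_def q_def .
    note A = this[OF i(1)] this[OF i(2)] this[OF i(3)]
    have m: "E 1 \<inter> E 2 = P" "E 1 \<inter> E 3 = P" "E 2 \<inter> E 3 = P" using meet by simp_all
    have "card B \<le> (q + 1) * ((q^6 + q^5) + (q^2 + q)^3 + (q^3 + q^2) * (q^3 + q^2 + q + 1))"
      using card_flags_through_vector_missing_solid_le[OF flags solids P
          conjunct2[OF ES[OF i(1)]] conjunct2[OF ES[OF i(2)]] conjunct2[OF ES[OF i(3)]]
          ES'(1,2)[OF i(1)] ES'(1,2)[OF i(2)] ES'(1,2)[OF i(3)]
          m vE[OF i(1,2)] vE[OF i(1,3)] vE[OF i(2,3)]
          ES'(3,4,5)[OF i(1)] vS[OF i(1)]]
      unfolding B_def q_def .
    with A show ?thesis by linarith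
  qed
  finally show ?thesis .
qed

theorem lemma4p3:
  fixes C :: "(('a::{field,finite}) vec7 set \<times> 'a vec7 set) set"
    and P Q :: "'a vec7 set"
    and E S :: "nat \<Rightarrow> 'a vec7 set"
  assumes indep: "independent_flags C"
    and planes: "\<And>E0. is_plane E0 \<Longrightarrow> card {S0. (E0, S0) \<in> C} \<le> CARD('a) + 1"
    and solids: "\<And>S0. is_solid S0 \<Longrightarrow> card {E0. (E0, S0) \<in> C} \<le> CARD('a) + 1"
    and P: "is_point P"
    and inD: "\<And>i. i \<in> {1,2,3} \<Longrightarrow> (E i, S i) \<in> Delta P C"
    and meet: "\<And>i j. i \<in> {1,2,3} \<Longrightarrow> j \<in> {1,2,3} \<Longrightarrow> i \<noteq> j \<Longrightarrow> E i \<inter> E j = P"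
    and Q: "is_point Q"
    and Qspan: "\<And>i j. i \<in> {1,2,3} \<Longrightarrow> j \<in> {1,2,3} \<Longrightarrow> \<not> Q \<subseteq> vec.span (E i \<union> E j)"
    and QS: "\<And>i. i \<in> {1,2,3} \<Longrightarrow> \<not> Q \<subseteq> S i"
  shows "card (Delta Q C) \<le> (let q = CARD('a) in
           3*q^8 + 12*q^7 + 21*q^6 + 28*q^5 + 26*q^4 + 18*q^3 + 12*q^2 + 8*q + 4)"
proof -
  obtain p where p: "P = vec.span {p}" "p \<noteq> 0" using P by (rule is_pointE)
  obtain v where v: "Q = vec.span {v}" using Q by (rule is_pointE)
  have flag_subspaces: "vec.subspace (fst F) \<and> vec.subspace (snd F)" if "F \<in> C" for F
    using indep that unfolding independent_flags_def is_flag23_def is_plane_def is_solid_def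
      psub_of_dim_def by auto
  have ES: "(E i, S i) \<in> C \<and> P \<subseteq> E i" if "i \<in> {1,2,3}" for i
    using inD[OF that] unfolding Delta_def by simp
  have vS: "v \<notin> S i" if "i \<in> {1,2,3}" for i
    using QS[OF that] span_singleton_subset_iff flag_subspaces[OF conjunct1[OF ES[OF that]]] v by auto
  have vE: "v \<notin> vec.span (E i \<union> E j)" if "i \<in> {1,2,3}" "j \<in> {1,2,3}" for i j
    using Qspan[OF that] span_singleton_subset_iff[OF vec.subspace_span] v by blast
  have "Delta Q C \<subseteq> {F \<in> C. v \<in> fst F}"
  proof
    fix F assume "F \<in> Delta Q C"
    then have "F \<in> C" "Q \<subseteq> fst F" unfolding Delta_def by auto
    then show "F \<in> {F \<in> C. v \<in> fst F}"
      using span_singleton_subset_iff[OF conjunct1[OF flag_subspaces]] v by auto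
  qed
  then have "card (Delta Q C) \<le> card {F \<in> C. v \<in> fst F}" by (rule card_mono[rotated]) simp
  also have "\<dots> \<le> 3 * ((CARD('a) + 1) * ((CARD('a)^3 + CARD('a)^2 + CARD('a) + 1) * (CARD('a)^4 + CARD('a)^3)
          + (CARD('a)^2 + 1) * (CARD('a)^2 + CARD('a) + 1)))
      + (CARD('a) + 1) * ((CARD('a)^6 + CARD('a)^5) + (CARD('a)^2 + CARD('a))^3
          + (CARD('a)^3 + CARD('a)^2) * (CARD('a)^3 + CARD('a)^2 + CARD('a) + 1))"
    by (rule card_flags_through_vector_le[OF indep planes solids p, where E = E and S = S])
      (use ES meet vE vS in auto)
  also have "\<dots> \<le> (let q = CARD('a) in
           3*q^8 + 12*q^7 + 21*q^6 + 28*q^5 + 26*q^4 + 18*q^3 + 12*q^2 + 8*q + 4)"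
    unfolding Let_def by (rule flag_count_polynomial_le)
  finally show ?thesis .
qed

end
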